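(* For every integer $n\ge 4$, $\chi^{\mathsf{s}}_{3,4}(n)\ge \lfloor\sqrt{n}\rfloor$.
   Context: A $k$-uniform hypergraph $H=(V,E)$ consists of a finite set $V$ and $E\subseteq\binom{V}{k}$. A (linear) embedding of $H$ into $\mathbb{R}^d$ is a map $\phi:V(H)\to\mathbb{R}^d$ with $\dim\operatorname{aff}\phi(e)=k-1$ for every edge $e$ and $\operatorname{conv}\phi(e_1)\cap\operatorname{conv}\phi(e_2)=\operatorname{conv}\phi(e_1\cap e_2)$ for all edges $e_1,e_2$. $\mathcal{E}_{d,k}$ is the set of $k$-uniform hypergraphs admitting such an embedding into $\mathbb{R}^d$. A strong $c$-coloring of $H$ is a map $\kappa:V(H)\to\{1,\dots,c\}$ with $|\kappa(e)|=k$ for every edge $e$; $\chi^{\mathsf{s}}(H)$ is the least such $c$. $\chi^{\mathsf{s}}_{d,k}(n)=\max\{\chi^{\mathsf{s}}(H): H\in\mathcal{E}_{d,k},\ |V(H)|=n\}$. *)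

theory Defs
  imports "HOL-Analysis.Analysis"
begin

definition uniform_hypergraph :: "nat \<Rightarrow> 'v set \<Rightarrow> 'v set set \<Rightarrow> bool" where
  "uniform_hypergraph k V E \<longleftrightarrow> finite V \<and> E \<subseteq> {e. e \<subseteq> V \<and> card e = k}"

definition linear_embedding :: "nat \<Rightarrow> 'v set \<Rightarrow> 'v set set \<Rightarrow> ('v \<Rightarrow> 'a::euclidean_space) \<Rightarrow> bool" where
  "linear_embedding k V E \<phi> \<longleftrightarrow>
     (\<forall>e\<in>E. aff_dim (\<phi> ` e) = int k - 1) \<and>
     (\<forall>e1\<in>E. \<forall>e2\<in>E. convex hull (\<phi> ` e1) \<inter> convex hull (\<phi> ` e2) = convex hull (\<phi> ` (e1 \<inter> e2)))"

text \<open>Membership in E_{d,k}, where the Euclidean space R^d is given as a type 'a.\<close>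
definition embeddable :: "'a::euclidean_space itself \<Rightarrow> nat \<Rightarrow> 'v set \<Rightarrow> 'v set set \<Rightarrow> bool" where
  "embeddable _ k V E \<longleftrightarrow> uniform_hypergraph k V E \<and> (\<exists>\<phi> :: 'v \<Rightarrow> 'a. linear_embedding k V E \<phi>)"

definition strong_coloring :: "nat \<Rightarrow> nat \<Rightarrow> 'v set \<Rightarrow> 'v set set \<Rightarrow> ('v \<Rightarrow> nat) \<Rightarrow> bool" where
  "strong_coloring k c V E \<kappa> \<longleftrightarrow> \<kappa> ` V \<subseteq> {1..c} \<and> (\<forall>e\<in>E. card (\<kappa> ` e) = k)"

definition strong_chromatic :: "nat \<Rightarrow> 'v set \<Rightarrow> 'v set set \<Rightarrow> nat" where
  "strong_chromatic k V E = (LEAST c. \<exists>\<kappa>. strong_coloring k c V E \<kappa>)"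

text \<open>chi^s_{d,k}(n); hypergraphs are taken with vertices in nat (every finite
  hypergraph is isomorphic to one of these).\<close>
definition chi_s_dk :: "'a::euclidean_space itself \<Rightarrow> nat \<Rightarrow> nat \<Rightarrow> nat" where
  "chi_s_dk d k n = Max {strong_chromatic k V E | (V :: nat set) E.
       embeddable d k V E \<and> card V = n}"

end

theory Submission
  imports Defs "HOL-Computational_Algebra.Polynomial"
begin

text \<open>
  The witness hypergraph lives on the vertices \<open>0..<n\<close>, grouped into blocks
  \<open>{2a, 2a+1}\<close>; its edges are the unions of two distinct blocks \<open>a, b < m\<close>.
  The even vertices \<open>0, 2, \<dots>, 2(m-1)\<close> pairwise share an edge, so every strong
  colouring uses at least \<open>m\<close> colours.

  The embedding places vertex \<open>v\<close> on the moment curve \<open>t \<mapsto> (t, t\<^sup>2, t\<^sup>3)\<close>.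
  Affine functionals on the curve are exactly cubic polynomials in \<open>t\<close>, so
  (i) four distinct curve points are affinely independent, because a nonzero
  cubic has at most three roots, and (ii) two point sets satisfy the
  intersection condition of a linear embedding as soon as some cubic vanishes on
  their common parameters and is positive on the rest of the first and negative
  on the rest of the second (a weakly separating hyperplane).  For each relative
  position of two edges an explicit product of linear factors provides such a
  cubic.  The main theorem then follows from \<open>2\<lfloor>\<surd>n\<rfloor> \<le> n\<close> for \<open>n \<ge> 4\<close>.
\<close>

subsection \<open>Hyperplane separation of convex hulls\<close>

text \<open>If a hyperplane weakly separates \<open>P\<close> from \<open>Q\<close> and the points of \<open>P\<close> on it
  all lie in \<open>Q\<close>, the hulls meet only in the hull of \<open>P \<inter> Q\<close>: their intersection
  lies in the face of \<open>conv P\<close> cut out by the hyperplane, which is spanned by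
  points of \<open>P \<inter> Q\<close>.\<close>

lemma hulls_Int_of_weak_separation:
  fixes P Q :: "'a::euclidean_space set"
  assumes "finite P"
    and P_above: "\<And>x. x \<in> P \<Longrightarrow> w \<bullet> x \<ge> b"
    and Q_below: "\<And>x. x \<in> Q \<Longrightarrow> w \<bullet> x \<le> b"
    and P_tight: "\<And>x. x \<in> P \<Longrightarrow> w \<bullet> x = b \<Longrightarrow> x \<in> Q"
  shows "convex hull P \<inter> convex hull Q = convex hull (P \<inter> Q)"
proof
  show "convex hull (P \<inter> Q) \<subseteq> convex hull P \<inter> convex hull Q"
    by (intro Int_greatest hull_mono Int_lower1 Int_lower2)
next
  have hull_P: "convex hull P \<subseteq> {x. w \<bullet> x \<ge> b}"
    by (rule hull_minimal[where S=convex, OF _ convex_halfspace_ge]) (use P_above in blast)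
  have hull_Q: "convex hull Q \<subseteq> {x. w \<bullet> x \<le> b}"
    by (rule hull_minimal[where S=convex, OF _ convex_halfspace_le]) (use Q_below in blast)
  define F where "F = convex hull P \<inter> {x. w \<bullet> x = b}"
  have "F face_of convex hull P"
    unfolding F_def
    by (rule face_of_Int_supporting_hyperplane_ge[OF convex_convex_hull]) (use hull_P in blast)
  then obtain S where S: "S \<subseteq> P" "F = convex hull S"
    by (rule face_of_convex_hull_subset[OF finite_imp_compact[OF \<open>finite P\<close>]])
  have "S \<subseteq> P \<inter> Q"
  proof
    fix x assume "x \<in> S"
    then have "x \<in> P" "x \<in> F" using S(1) hull_inc[of x S] unfolding S(2) by blast+
    then show "x \<in> P \<inter> Q" using P_tight unfolding F_def by blast
  qed
  then have "F \<subseteq> convex hull (P \<inter> Q)" unfolding S(2) by (rule hull_mono)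
  moreover have "convex hull P \<inter> convex hull Q \<subseteq> F"
  proof
    fix x assume "x \<in> convex hull P \<inter> convex hull Q"
    then show "x \<in> F" using hull_P hull_Q unfolding F_def by (auto intro: order.antisym)
  qed
  ultimately show "convex hull P \<inter> convex hull Q \<subseteq> convex hull (P \<inter> Q)" by blast
qed

subsection \<open>The moment curve in \<open>\<real>\<^sup>3\<close>\<close>

definition moment :: "real \<Rightarrow> real^3" where
  "moment t = vector [t, t^2, t^3]"

lemma inner_moment: "w \<bullet> moment t = w$1 * t + w$2 * t^2 + w$3 * t^3"
  by (simp add: moment_def inner_vec_def sum_3 mult.commute)

lemma inj_moment: "inj moment"
proof (rule injI)
  fix s t assume "moment s = moment t"
  then have "moment s $ 1 = moment t $ 1" by simp
  then show "s = t" by (simp add: moment_def)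
qed

definition coeff_vector :: "real poly \<Rightarrow> real^3" where
  "coeff_vector p = vector [coeff p 1, coeff p 2, coeff p 3]"

lemma poly_cubic_as_functional:
  assumes "degree p \<le> 3"
  shows "poly p t = coeff p 0 + coeff_vector p \<bullet> moment t"
proof -
  have "poly p t = (\<Sum>i\<le>3. coeff p i * t ^ i)"
    unfolding poly_altdef
  proof (rule sum.mono_neutral_left)
    show "\<forall>i\<in>{..3} - {..degree p}. coeff p i * t ^ i = 0"
      by (simp add: coeff_eq_0)
  qed (use assms in auto)
  also have "\<dots> = coeff p 0 + coeff_vector p \<bullet> moment t"
    by (simp add: inner_moment coeff_vector_def atMost_Suc eval_nat_numeral)
  finally show ?thesis .
qed

lemma functional_as_cubic:
  "w \<bullet> moment t - b = poly [:-b, w$1, w$2, w$3:] t"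
  by (simp add: inner_moment algebra_simps power2_eq_square power3_eq_cube)

lemma degree_cubic_le: "degree [:a, b, c, d:] \<le> 3"
  using degree_pCons_le[of a "[:b, c, d:]"] degree_pCons_le[of b "[:c, d:]"]
    degree_pCons_le[of c "[:d:]"]
  by simp

text \<open>Any four distinct points of the moment curve are affinely independent: a
  hyperplane through them would give a nonzero cubic with four roots.\<close>

lemma moment_aff_dim:
  assumes "card T = 4"
  shows "aff_dim (moment ` T) = 3"
proof (rule ccontr)
  assume "aff_dim (moment ` T) \<noteq> 3"
  moreover have "aff_dim (moment ` T) \<le> 3"
    using aff_dim_le_DIM[of "moment ` T"] by simp
  ultimately have "aff_dim (moment ` T) < int DIM(real^3)" by simp
  then obtain w b where "w \<noteq> 0" and hyp: "moment ` T \<subseteq> {x. w \<bullet> x = b}"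
    by (rule aff_lowdim_subset_hyperplane)
  define q where "q = [:-b, w$1, w$2, w$3:]"
  have "q = 0"
  proof (rule poly_eqI_degree)
    show "poly q t = poly 0 t" if "t \<in> T" for t
      using hyp that functional_as_cubic[of w t b] unfolding q_def by auto
    show "degree q < card T" "degree 0 < card T"
      using assms degree_cubic_le unfolding q_def by (simp_all add: le_less_trans)
  qed
  then have "w = 0" unfolding q_def by (simp add: vec_eq_iff forall_3)
  with \<open>w \<noteq> 0\<close> show False ..
qed

text \<open>A cubic with the sign pattern \<open>0\<close> on \<open>S \<inter> T\<close>, \<open>+\<close> on \<open>S - T\<close>, \<open>-\<close> on \<open>T - S\<close>
  yields a weakly separating hyperplane, hence the intersection property of hulls.\<close>

lemma moment_hulls_Int:
  fixes S T :: "real set" and p :: "real poly"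
  assumes "finite S" "degree p \<le> 3"
    and common: "\<And>t. t \<in> S \<Longrightarrow> t \<in> T \<Longrightarrow> poly p t = 0"
    and S_only: "\<And>t. t \<in> S \<Longrightarrow> t \<notin> T \<Longrightarrow> poly p t > 0"
    and T_only: "\<And>t. t \<in> T \<Longrightarrow> t \<notin> S \<Longrightarrow> poly p t < 0"
  shows "convex hull (moment ` S) \<inter> convex hull (moment ` T) = convex hull (moment ` (S \<inter> T))"
proof -
  have val: "coeff_vector p \<bullet> moment t = poly p t - coeff p 0" for t
    using poly_cubic_as_functional[OF assms(2)] by simp
  have "convex hull (moment ` S) \<inter> convex hull (moment ` T) = convex hull (moment ` S \<inter> moment ` T)"
  proof (rule hulls_Int_of_weak_separation[where w = "coeff_vector p" and b = "- coeff p 0"])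
    show "finite (moment ` S)" using assms(1) by simp
    show "coeff_vector p \<bullet> x \<ge> - coeff p 0" if "x \<in> moment ` S" for x
      using that common S_only val by (force simp: less_imp_le)
    show "coeff_vector p \<bullet> x \<le> - coeff p 0" if "x \<in> moment ` T" for x
      using that common T_only val by (force simp: less_imp_le)
    show "x \<in> moment ` T" if "x \<in> moment ` S" "coeff_vector p \<bullet> x = - coeff p 0" for x
      using that S_only val by force
  qed
  then show ?thesis by (simp add: image_Int[OF inj_moment])
qed

subsection \<open>Compatibility of vertex sets placed on the curve\<close>

definition vertex_point :: "nat \<Rightarrow> real^3" where
  "vertex_point v = moment (real v)"

definition compatible :: "nat set \<Rightarrow> nat set \<Rightarrow> bool" where
  "compatible A B \<longleftrightarrow>
     convex hull (vertex_point ` A) \<inter> convex hull (vertex_point ` B) = convex hull (vertex_point ` (A \<inter> B))"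

lemma compatible_sym: "compatible A B \<Longrightarrow> compatible B A"
  unfolding compatible_def by (simp add: Int_commute)

lemma compatible_refl: "compatible A A"
  unfolding compatible_def by simp

lemma compatible_by_cubic:
  fixes A B :: "nat set" and p :: "real poly"
  assumes "finite A" "degree p \<le> 3"
    and "\<And>t. t \<in> A \<Longrightarrow> t \<in> B \<Longrightarrow> poly p (real t) = 0"
    and "\<And>t. t \<in> A \<Longrightarrow> t \<notin> B \<Longrightarrow> poly p (real t) > 0"
    and "\<And>t. t \<in> B \<Longrightarrow> t \<notin> A \<Longrightarrow> poly p (real t) < 0"
  shows "compatible A B"
proof -
  have points: "vertex_point ` X = moment ` (real ` X)" for X
    by (simp add: vertex_point_def image_image)
  have "convex hull (moment ` real ` A) \<inter> convex hull (moment ` real ` B) = convex hull (moment ` (real ` A \<inter> real ` B))"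
    by (rule moment_hulls_Int[OF _ assms(2)]) (use assms in auto)
  then show ?thesis
    unfolding compatible_def points by (simp add: image_Int[OF inj_of_nat])
qed

subsection \<open>Edges made of two blocks\<close>

text \<open>The real number \<open>gap y\<close> lies
  strictly between block \<open>y - 1\<close> and block \<open>y\<close> and serves as a root of the
  separating cubics.\<close>

definition block :: "nat \<Rightarrow> nat set" where
  "block a = {2*a, 2*a + 1}"

definition edge :: "nat \<Rightarrow> nat \<Rightarrow> nat set" where
  "edge a b = block a \<union> block b"

definition gap :: "nat \<Rightarrow> real" where
  "gap y = 2 * real y - 1/2"

lemma edge_comm: "edge a b = edge b a"
  unfolding edge_def by auto

lemma blocks_disjoint: "x \<noteq> y \<Longrightarrow> block x \<inter> block y = {}"
  unfolding block_def by auto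

lemma finite_edge: "finite (edge a b)"
  unfolding edge_def block_def by simp

lemma card_edge: "a \<noteq> b \<Longrightarrow> card (edge a b) = 4"
  unfolding edge_def block_def by auto

lemma below_gap: "t \<in> block x \<Longrightarrow> x < y \<Longrightarrow> real t < gap y"
  unfolding block_def gap_def by auto

lemma above_gap: "t \<in> block x \<Longrightarrow> y \<le> x \<Longrightarrow> real t > gap y"
  unfolding block_def gap_def by auto

lemma block_factor_pos:
  assumes "t \<notin> block x"
  shows "(real t - 2 * real x) * (real t - (2 * real x + 1)) > 0"
proof (cases "t < 2 * x")
  case True
  then have "real t \<le> 2 * real x - 1" by linarith
  then show ?thesis by (intro mult_neg_neg) auto
next
  case False
  with assms have "real t \<ge> 2 * real x + 2" unfolding block_def by auto
  then show ?thesis by (intro mult_pos_pos) auto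
qed

lemma block_factor_zero:
  "t \<in> block x \<Longrightarrow> (real t - 2 * real x) * (real t - (2 * real x + 1)) = 0"
  unfolding block_def by auto

text \<open>Two edges sharing the block \<open>x\<close>: the cubic vanishes on block \<open>x\<close> and changes
  sign between the two private blocks \<open>y < z\<close>.\<close>

lemma compatible_sharing:
  assumes "x \<noteq> y" "x \<noteq> z" "y < z"
  shows "compatible (edge x y) (edge x z)"
proof (rule compatible_by_cubic)
  define p where "p = smult (-1) ([:-(2 * real x), 1:] * [:-(2 * real x + 1), 1:] * [:-gap z, 1:])"
  have val: "poly p (real t) = (real t - 2 * real x) * (real t - (2 * real x + 1)) * (gap z - real t)" for t
    unfolding p_def by (simp add: algebra_simps)
  show "degree p \<le> 3" unfolding p_def by simp
  fix t
  show "poly p (real t) = 0" if "t \<in> edge x y" "t \<in> edge x z"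
    using that assms blocks_disjoint[of y z] block_factor_zero unfolding val edge_def by auto
  show "poly p (real t) > 0" if "t \<in> edge x y" "t \<notin> edge x z"
    using that assms below_gap[of t y z] block_factor_pos[of t x]
    unfolding val edge_def by (auto intro: mult_pos_pos)
  show "poly p (real t) < 0" if "t \<in> edge x z" "t \<notin> edge x y"
    using that assms above_gap[of t z z] block_factor_pos[of t x]
    unfolding val edge_def by (auto intro: mult_pos_neg)
qed (rule finite_edge)

lemma edges_disjoint:
  "a \<noteq> c \<Longrightarrow> a \<noteq> d \<Longrightarrow> b \<noteq> c \<Longrightarrow> b \<noteq> d \<Longrightarrow> edge a b \<inter> edge c d = {}"
  unfolding edge_def using blocks_disjoint by blast

text \<open>Disjoint edges \<open>{a, b}\<close>, \<open>{c, d}\<close> with \<open>a < c\<close> come in three patterns: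
  apart (\<open>b < c\<close>), interleaved (\<open>c < b < d\<close>) and nested (\<open>d < b\<close>).  The roots of
  the cubic are placed at gaps where membership switches between the two edges.\<close>

lemma compatible_apart:
  assumes "a < b" "b < c" "c < d"
  shows "compatible (edge a b) (edge c d)"
proof (rule compatible_by_cubic)
  define p where "p = smult (-1) [:-gap c, 1:]"
  have val: "poly p (real t) = gap c - real t" for t
    unfolding p_def by simp
  show "degree p \<le> 3" unfolding p_def by simp
  fix t
  show "poly p (real t) = 0" if "t \<in> edge a b" "t \<in> edge c d"
    using that edges_disjoint[of a c d b] assms by auto
  show "poly p (real t) > 0" if "t \<in> edge a b" "t \<notin> edge c d"
    using that assms below_gap[of t a c] below_gap[of t b c] unfolding val edge_def by auto
  show "poly p (real t) < 0" if "t \<in> edge c d" "t \<notin> edge a b"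
    using that assms above_gap[of t c c] above_gap[of t d c] unfolding val edge_def by auto
qed (rule finite_edge)

lemma compatible_interleaved:
  assumes "a < c" "c < b" "b < d"
  shows "compatible (edge a b) (edge c d)"
proof (rule compatible_by_cubic)
  define p where "p = smult (-1) ([:-gap c, 1:] * [:-gap b, 1:] * [:-gap d, 1:])"
  have val: "poly p (real t) = - ((real t - gap c) * (real t - gap b) * (real t - gap d))" for t
    unfolding p_def by (simp add: algebra_simps)
  show "degree p \<le> 3" unfolding p_def by simp
  fix t
  show "poly p (real t) = 0" if "t \<in> edge a b" "t \<in> edge c d"
    using that edges_disjoint[of a c d b] assms by auto
  show "poly p (real t) > 0" if "t \<in> edge a b" "t \<notin> edge c d"
  proof -
    have "t \<in> block a \<or> t \<in> block b" using that unfolding edge_def by blast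
    then show ?thesis
    proof
      assume "t \<in> block a"
      with assms have "real t < gap c" "real t < gap b" "real t < gap d"
        using below_gap by auto
      then show ?thesis unfolding val by (simp add: mult_less_0_iff zero_less_mult_iff)
    next
      assume "t \<in> block b"
      with assms have "real t > gap c" "real t > gap b" "real t < gap d"
        using below_gap above_gap by auto
      then show ?thesis unfolding val by (simp add: mult_less_0_iff zero_less_mult_iff)
    qed
  qed
  show "poly p (real t) < 0" if "t \<in> edge c d" "t \<notin> edge a b"
  proof -
    have "t \<in> block c \<or> t \<in> block d" using that unfolding edge_def by blast
    then show ?thesis
    proof
      assume "t \<in> block c"
      with assms have "real t > gap c" "real t < gap b" "real t < gap d"
        using below_gap above_gap by auto
      then show ?thesis unfolding val by (simp add: mult_less_0_iff zero_less_mult_iff)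
    next
      assume "t \<in> block d"
      with assms have "real t > gap c" "real t > gap b" "real t > gap d"
        using above_gap by auto
      then show ?thesis unfolding val by (simp add: mult_less_0_iff zero_less_mult_iff)
    qed
  qed
qed (rule finite_edge)

lemma compatible_nested:
  assumes "a < c" "c < d" "d < b"
  shows "compatible (edge a b) (edge c d)"
proof (rule compatible_by_cubic)
  define p where "p = [:-gap c, 1:] * [:-gap (Suc d), 1:]"
  have val: "poly p (real t) = (real t - gap c) * (real t - gap (Suc d))" for t
    unfolding p_def by (simp add: algebra_simps)
  show "degree p \<le> 3" unfolding p_def by simp
  fix t
  show "poly p (real t) = 0" if "t \<in> edge a b" "t \<in> edge c d"
    using that edges_disjoint[of a c d b] assms by auto
  show "poly p (real t) > 0" if "t \<in> edge a b" "t \<notin> edge c d"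
  proof -
    have "t \<in> block a \<or> t \<in> block b" using that unfolding edge_def by blast
    then show ?thesis
    proof
      assume "t \<in> block a"
      with assms have "real t < gap c" "real t < gap (Suc d)"
        using below_gap by auto
      then show ?thesis unfolding val by (simp add: zero_less_mult_iff)
    next
      assume "t \<in> block b"
      with assms have "real t > gap c" "real t > gap (Suc d)"
        using above_gap by auto
      then show ?thesis unfolding val by (simp add: zero_less_mult_iff)
    qed
  qed
  show "poly p (real t) < 0" if "t \<in> edge c d" "t \<notin> edge a b"
  proof -
    from that assms have "real t > gap c" "real t < gap (Suc d)"
      using below_gap above_gap unfolding edge_def by (auto simp del: of_nat_Suc)
    then show ?thesis unfolding val by (simp add: mult_less_0_iff)
  qed
qed (rule finite_edge)

lemma compatible_edges_ordered:
  assumes "a < b" "c < d" "a \<le> c"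
  shows "compatible (edge a b) (edge c d)"
proof (cases "a = c")
  case True
  consider "b = d" | "b < d" | "d < b" by linarith
  then show ?thesis
  proof cases
    case 1 then show ?thesis using True by (simp add: compatible_refl)
  next
    case 2 then show ?thesis using True assms compatible_sharing[of a b d] by simp
  next
    case 3 then show ?thesis using True assms compatible_sharing[of a d b] compatible_sym by simp
  qed
next
  case False
  with assms have "a < c" by simp
  consider "b < c" | "b = c" | "c < b" "b < d" | "b = d" | "d < b" by linarith
  then show ?thesis
  proof cases
    case 1 then show ?thesis using assms compatible_apart by simp
  next
    case 2
    with assms have "compatible (edge b a) (edge b d)" by (intro compatible_sharing) auto
    with 2 show ?thesis by (simp add: edge_comm)
  next
    case 3 then show ?thesis using \<open>a < c\<close> compatible_interleaved by simp
  next
    case 4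
    with assms \<open>a < c\<close> have "compatible (edge b a) (edge b c)" by (intro compatible_sharing) auto
    with 4 show ?thesis by (simp add: edge_comm)
  next
    case 5 then show ?thesis using \<open>a < c\<close> assms compatible_nested by simp
  qed
qed

lemma compatible_edges:
  assumes "a < b" "c < d"
  shows "compatible (edge a b) (edge c d)"
proof (cases "a \<le> c")
  case True then show ?thesis using assms compatible_edges_ordered by simp
next
  case False then show ?thesis using assms compatible_edges_ordered[of c d a b] compatible_sym by simp
qed

definition pair_edges :: "nat \<Rightarrow> nat set set" where
  "pair_edges m = {edge a b | a b. a < b \<and> b < m}"

lemma pair_hypergraph_embeddable:
  assumes "2 * m \<le> n"
  shows "embeddable TYPE(real^3) 4 {0..<n} (pair_edges m)"
  unfolding embeddable_def
proof
  have "edge a b \<subseteq> {0..<n}" if "a < b" "b < m" for a b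
    using that assms unfolding edge_def block_def by auto
  then show "uniform_hypergraph 4 {0..<n} (pair_edges m)"
    unfolding uniform_hypergraph_def pair_edges_def using card_edge by fastforce
  have "linear_embedding 4 {0..<n} (pair_edges m) vertex_point"
    unfolding linear_embedding_def
  proof (intro conjI ballI)
    fix e assume "e \<in> pair_edges m"
    then obtain a b where "e = edge a b" "a < b" unfolding pair_edges_def by blast
    then show "aff_dim (vertex_point ` e) = int 4 - 1"
      using moment_aff_dim[of "real ` e"] card_edge[of a b]
      by (simp add: vertex_point_def image_image card_image)
  next
    fix e1 e2 assume "e1 \<in> pair_edges m" "e2 \<in> pair_edges m"
    then obtain a b c d where "e1 = edge a b" "a < b" "e2 = edge c d" "c < d"
      unfolding pair_edges_def by blast
    then show "convex hull (vertex_point ` e1) \<inter> convex hull (vertex_point ` e2) =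
        convex hull (vertex_point ` (e1 \<inter> e2))"
      using compatible_edges[of a b c d] unfolding compatible_def by simp
  qed
  then show "\<exists>\<phi>::nat \<Rightarrow> real^3. linear_embedding 4 {0..<n} (pair_edges m) \<phi>" by blast
qed

subsection \<open>Strong colourings\<close>

text \<open>Numbering the vertices \<open>1, \<dots>, |V|\<close> is a strong colouring of any uniform
  hypergraph; hence the strong chromatic number is attained and at most \<open>|V|\<close>.\<close>

lemma strong_coloring_by_enumeration:
  assumes "uniform_hypergraph k V E"
  shows "\<exists>\<kappa>. strong_coloring k (card V) V E \<kappa>"
proof -
  have "finite V" and edges: "\<And>e. e \<in> E \<Longrightarrow> e \<subseteq> V \<and> card e = k"
    using assms unfolding uniform_hypergraph_def by auto
  obtain h where h: "bij_betw h V {0..<card V}"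
    using ex_bij_betw_finite_nat[OF \<open>finite V\<close>] by blast
  have "strong_coloring k (card V) V E (Suc \<circ> h)"
    unfolding strong_coloring_def
  proof
    show "(Suc \<circ> h) ` V \<subseteq> {1..card V}"
      using bij_betwE[OF h] by auto
    show "\<forall>e\<in>E. card ((Suc \<circ> h) ` e) = k"
    proof
      fix e assume "e \<in> E"
      then have "inj_on (Suc \<circ> h) e"
        using bij_betw_imp_inj_on[OF h] edges inj_on_subset by (fastforce simp: comp_inj_on)
      then show "card ((Suc \<circ> h) ` e) = k" using edges \<open>e \<in> E\<close> card_image by metis
    qed
  qed
  then show ?thesis by blast
qed

lemma strong_chromatic_le_card:
  "uniform_hypergraph k V E \<Longrightarrow> strong_chromatic k V E \<le> card V"
  unfolding strong_chromatic_def by (rule Least_le) (rule strong_coloring_by_enumeration)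

lemma strong_chromatic_attained:
  assumes "uniform_hypergraph k V E"
  shows "\<exists>\<kappa>. strong_coloring k (strong_chromatic k V E) V E \<kappa>"
  unfolding strong_chromatic_def
  by (rule LeastI_ex) (use strong_coloring_by_enumeration[OF assms] in blast)

lemma strong_coloring_clique_bound:
  assumes "uniform_hypergraph k V E" "strong_coloring k c V E \<kappa>" "C \<subseteq> V"
    and clique: "\<And>x y. x \<in> C \<Longrightarrow> y \<in> C \<Longrightarrow> x \<noteq> y \<Longrightarrow> \<exists>e\<in>E. x \<in> e \<and> y \<in> e"
  shows "card C \<le> c"
proof -
  have "finite V" and edges: "\<And>e. e \<in> E \<Longrightarrow> e \<subseteq> V \<and> card e = k"
    using assms(1) unfolding uniform_hypergraph_def by auto
  have "inj_on \<kappa> C"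
  proof (rule inj_onI, rule ccontr)
    fix x y assume "x \<in> C" "y \<in> C" "\<kappa> x = \<kappa> y" "x \<noteq> y"
    then obtain e where "e \<in> E" "x \<in> e" "y \<in> e" using clique by blast
    moreover have "card (\<kappa> ` e) = card e"
      using assms(2) edges[OF \<open>e \<in> E\<close>] \<open>e \<in> E\<close> unfolding strong_coloring_def by simp
    then have "inj_on \<kappa> e"
      using edges[OF \<open>e \<in> E\<close>] \<open>finite V\<close> by (intro eq_card_imp_inj_on) (auto intro: finite_subset)
    ultimately show False using \<open>\<kappa> x = \<kappa> y\<close> \<open>x \<noteq> y\<close> by (auto dest: inj_onD)
  qed
  then have "card C = card (\<kappa> ` C)" by (simp add: card_image)
  also have "\<dots> \<le> card {1..c}"
    using assms(2,3) unfolding strong_coloring_def by (intro card_mono) auto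
  finally show ?thesis by simp
qed

text \<open>The even vertices \<open>2a\<close>, \<open>a < m\<close>, pairwise share an edge of the witness, so it
  needs at least \<open>m\<close> colours.\<close>

lemma pair_hypergraph_chromatic:
  assumes "2 * m \<le> n"
  shows "m \<le> strong_chromatic 4 {0..<n} (pair_edges m)"
proof -
  have unif: "uniform_hypergraph 4 {0..<n} (pair_edges m)"
    using pair_hypergraph_embeddable[OF assms] unfolding embeddable_def by blast
  obtain \<kappa> where \<kappa>: "strong_coloring 4 (strong_chromatic 4 {0..<n} (pair_edges m)) {0..<n} (pair_edges m) \<kappa>"
    using strong_chromatic_attained[OF unif] by blast
  define C where "C = (\<lambda>a. 2 * a) ` {..<m}"
  have "card C = m" unfolding C_def by (simp add: card_image inj_on_def)
  moreover have "card C \<le> strong_chromatic 4 {0..<n} (pair_edges m)"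
  proof (rule strong_coloring_clique_bound[OF unif \<kappa>])
    show "C \<subseteq> {0..<n}" unfolding C_def using assms by auto
    fix x y assume "x \<in> C" "y \<in> C" "x \<noteq> y"
    then obtain a b where "x = 2 * a" "y = 2 * b" "a < m" "b < m" "a \<noteq> b"
      unfolding C_def by auto
    then have "min a b < max a b" "max a b < m" by auto
    then have "edge (min a b) (max a b) \<in> pair_edges m" unfolding pair_edges_def by blast
    moreover have "x \<in> edge (min a b) (max a b)" "y \<in> edge (min a b) (max a b)"
      using \<open>x = 2 * a\<close> \<open>y = 2 * b\<close> unfolding edge_def block_def by (auto simp: min_def max_def)
    ultimately show "\<exists>e\<in>pair_edges m. x \<in> e \<and> y \<in> e" by blast
  qed
  ultimately show ?thesis by simp
qed

text \<open>\<open>\<chi>\<^sup>s\<^sub>d\<^sub>,\<^sub>k(n)\<close> dominates every embeddable hypergraph on \<open>n\<close> vertices; the maximum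
  is over a finite set since each value is at most \<open>n\<close>.\<close>

lemma chi_s_dk_ge:
  fixes V :: "nat set"
  assumes "embeddable d k V E" "card V = n"
  shows "strong_chromatic k V E \<le> chi_s_dk d k n"
proof -
  let ?S = "{strong_chromatic k V E | (V :: nat set) E. embeddable d k V E \<and> card V = n}"
  have "?S \<subseteq> {..n}"
    using strong_chromatic_le_card unfolding embeddable_def by fastforce
  then have "finite ?S" by (rule finite_subset) simp
  moreover have "strong_chromatic k V E \<in> ?S" using assms by blast
  ultimately show ?thesis unfolding chi_s_dk_def by (rule Max_ge)
qed

text \<open>For \<open>n \<ge> 4\<close> we have \<open>\<lfloor>\<surd>n\<rfloor> \<ge> 2\<close>, hence \<open>2\<lfloor>\<surd>n\<rfloor> \<le> \<lfloor>\<surd>n\<rfloor>\<^sup>2 \<le> n\<close>.\<close>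

lemma double_floor_sqrt_le:
  assumes "n \<ge> 4"
  shows "2 * nat \<lfloor>sqrt (real n)\<rfloor> \<le> n"
proof -
  define m where "m = nat \<lfloor>sqrt (real n)\<rfloor>"
  have "real m \<le> sqrt (real n)" unfolding m_def by simp
  then have "real m * real m \<le> sqrt (real n) * sqrt (real n)"
    by (intro mult_mono) auto
  then have "real m * real m \<le> real n" by simp
  then have "m * m \<le> n" by (simp flip: of_nat_mult)
  moreover have "2 \<le> sqrt (real n)" using assms by (intro real_le_rsqrt) simp
  then have "2 \<le> m" unfolding m_def by linarith
  ultimately show ?thesis unfolding m_def[symmetric]
    by (metis le_trans mult_le_mono1)
qed

theorem mainTheorem9:
  fixes n :: nat
  assumes "n \<ge> 4"
  shows "\<lfloor>sqrt (real n)\<rfloor> \<le> int (chi_s_dk TYPE(real^3) 4 n)"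
proof -
  define m where "m = nat \<lfloor>sqrt (real n)\<rfloor>"
  have le: "2 * m \<le> n" unfolding m_def using double_floor_sqrt_le[OF assms] .
  have "m \<le> strong_chromatic 4 {0..<n} (pair_edges m)"
    using pair_hypergraph_chromatic[OF le] .
  also have "\<dots> \<le> chi_s_dk TYPE(real^3) 4 n"
    using chi_s_dk_ge[OF pair_hypergraph_embeddable[OF le]] by simp
  finally show ?thesis unfolding m_def by linarith
qed

end
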